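(* Let $G=(V,E)$ be a graph with $n$ vertices and maximum degree $\Delta$, and let $c>0$ be a constant determining the threshold $\tau=(c+1)\log n$. The randomized variant of Procedure Edge-Coloring with parameter $h\le\log\Delta-2$ computes a proper $(\Delta+3\cdot 2^h)$-edge-coloring of $G$ with probability at least $1-\frac{1}{n^{c}}$.
   Context: Logarithms are base 2. A proper $k$-edge-coloring is a map $\varphi:E\to\{1,\dots,k\}$ with distinct colors on distinct edges sharing an endpoint. A degree-splitting of $H$ with discrepancy $\kappa$ is a partition $(E_1,E_2)$ of $E(H)$ with $|\deg_{E_1}(v)-\deg_{E_2}(v)|\le\kappa$ for all $v$. Procedure Edge-Coloring$(H,h)$: if $h=0$, return a $(\Delta(H)+1)$-edge-coloring of $H$ with palette $\{1,\dots,\Delta(H)+1\}$ computed by a base-case subroutine. Otherwise compute a degree-splitting $(E_1,E_2)$ of $H$ with discrepancy at most 2 and $\{|E_1|,|E_2|\}=\{\lfloor |E(H)|/2\rfloor,\lceil |E(H)|/2\rceil\}$; let $H_1=(V(H),E_1)$, $H_2=(V(H),E_2)$ with isolated vertices discarded; compute $\varphi_1=$ Edge-Coloring$(H_1,h-1)$, $\varphi_2=$ Edge-Coloring$(H_2,h-1)$; return $\varphi=\varphi_1$ on $E_1$ and $\varphi=p_1+\varphi_2$ on $E_2$, where $p_1$ is the palette size of $\varphi_1$. Randomized variant: in the base case, for an input with $n'$ vertices, $m'$ edges and maximum degree $\Delta'$, if $n'\ge\tau$ a randomized algorithm is used that outputs a proper $(\Delta'+1)$-edge-coloring with probability at least $1-\Delta'^{-n'}$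 (in $O(\Delta'^{18}n')$ time); otherwise a deterministic algorithm is used that always outputs a proper $(\Delta'+1)$-edge-coloring (in $O(m'\Delta'\log n')$ time). *)

theory Defs
  imports "HOL-Probability.Probability_Mass_Function"
begin

text \<open>Graphs: an edge set is a set of 2-element vertex sets. The vertex set of a
  subgraph H (with isolated vertices discarded) is the union of its edges.\<close>

definition deg :: "'a set set \<Rightarrow> 'a \<Rightarrow> nat" where
  "deg F v = card {e \<in> F. v \<in> e}"

definition maxdeg :: "'a set set \<Rightarrow> nat" where
  "maxdeg F = Max ({deg F v | v. v \<in> \<Union>F} \<union> {0})"

definition proper_edge_coloring :: "'a set set \<Rightarrow> ('a set \<Rightarrow> nat) \<Rightarrow> nat \<Rightarrow> bool" where
  "proper_edge_coloring F \<phi> k \<longleftrightarrow>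
     (\<forall>e\<in>F. \<phi> e \<in> {1..k}) \<and>
     (\<forall>e\<in>F. \<forall>e'\<in>F. e \<noteq> e' \<and> e \<inter> e' \<noteq> {} \<longrightarrow> \<phi> e \<noteq> \<phi> e')"

definition degree_splitting :: "'a set set \<Rightarrow> 'a set set \<Rightarrow> nat \<Rightarrow> bool" where
  "degree_splitting F E1 \<kappa> \<longleftrightarrow> E1 \<subseteq> F \<and>
     (\<forall>v. \<bar>int (deg E1 v) - int (deg (F - E1) v)\<bar> \<le> int \<kappa>)"

fun palette :: "('a set set \<Rightarrow> 'a set set) \<Rightarrow> 'a set set \<Rightarrow> nat \<Rightarrow> nat" where
  "palette split F 0 = maxdeg F + 1"
| "palette split F (Suc h) = palette split (split F) h + palette split (F - split F) h"

text \<open>Randomized variant of Procedure Edge-Coloring, as a distribution over colorings.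
  rand: randomized base-case algorithm; detalg: deterministic base-case algorithm;
  tau: threshold on the number of (non-isolated) vertices.\<close>
fun edge_coloring ::
  "('a set set \<Rightarrow> 'a set set) \<Rightarrow> ('a set set \<Rightarrow> ('a set \<Rightarrow> nat) pmf) \<Rightarrow>
   ('a set set \<Rightarrow> ('a set \<Rightarrow> nat)) \<Rightarrow> real \<Rightarrow> 'a set set \<Rightarrow> nat \<Rightarrow> ('a set \<Rightarrow> nat) pmf" where
  "edge_coloring split rand detalg \<tau> F 0 =
     (if real (card (\<Union>F)) \<ge> \<tau> then rand F else return_pmf (detalg F))"
| "edge_coloring split rand detalg \<tau> F (Suc h) =
     bind_pmf (edge_coloring split rand detalg \<tau> (split F) h) (\<lambda>\<phi>1.
     bind_pmf (edge_coloring split rand detalg \<tau> (F - split F) h) (\<lambda>\<phi>2.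
     return_pmf (\<lambda>e. if e \<in> split F then \<phi>1 e else palette split (split F) h + \<phi>2 e)))"

end

theory Submission
  imports Defs
begin

text \<open>A degree-splitting with discrepancy 2 of a graph of maximum degree \<open>\<Delta>\<close> has halves whose
  maximum degrees lie between \<open>(\<Delta> - 2) / 2\<close> and \<open>(\<Delta> + 2) / 2\<close>. Hence the palette sizes of
  the recursion add up to at most \<open>\<Delta> + 3 \<cdot> 2^h - 2\<close>, and for \<open>h \<le> log \<Delta> - 2\<close> each of the
  \<open>2^h\<close> leaves still has maximum degree at least 2. A leaf with at least \<open>\<tau> = (c + 1) log n\<close>
  vertices is coloured by the randomized algorithm, which then fails with probability at most
  \<open>2^-\<tau> = n^-(c+1)\<close>; the other leaves never fail. A union bound over the \<open>2^h \<le> \<Delta> \<le> n\<close>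
  leaves bounds the failure probability by \<open>n^-c\<close>.\<close>

lemma measure_pmf_bind_union_bound:
  fixes p :: "'a pmf" and q :: "'b pmf"
  assumes P: "1 - a \<le> measure_pmf.prob p {x. P x}"
    and Q: "1 - b \<le> measure_pmf.prob q {y. Q y}"
    and g: "\<And>x y. P x \<Longrightarrow> Q y \<Longrightarrow> g x y \<in> A"
  shows "1 - a - b \<le> measure_pmf.prob (bind_pmf p (\<lambda>x. bind_pmf q (\<lambda>y. return_pmf (g x y)))) A"
proof -
  let ?pq = "pair_pmf p q"
  have "bind_pmf p (\<lambda>x. bind_pmf q (\<lambda>y. return_pmf (g x y))) = map_pmf (case_prod g) ?pq"
    by (simp add: pair_pmf_def map_bind_pmf)
  then have "measure_pmf.prob (bind_pmf p (\<lambda>x. bind_pmf q (\<lambda>y. return_pmf (g x y)))) A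
      = 1 - measure_pmf.prob ?pq (- (case_prod g -` A))"
    using measure_pmf.prob_compl[of "case_prod g -` A" ?pq] by (simp add: Compl_eq_Diff_UNIV)
  moreover have "measure_pmf.prob ?pq (- (case_prod g -` A))
      \<le> measure_pmf.prob ?pq (fst -` {x. \<not> P x} \<union> snd -` {y. \<not> Q y})"
    using g by (intro measure_pmf.finite_measure_mono) auto
  moreover have "\<dots> \<le> measure_pmf.prob ?pq (fst -` {x. \<not> P x}) + measure_pmf.prob ?pq (snd -` {y. \<not> Q y})"
    by (rule measure_Un_le) auto
  moreover have "measure_pmf.prob ?pq (fst -` {x. \<not> P x}) = 1 - measure_pmf.prob p {x. P x}"
    using measure_map_pmf[of fst ?pq "{x. \<not> P x}"] measure_pmf.prob_neg[of p P]
    by (simp add: map_fst_pair_pmf)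
  moreover have "measure_pmf.prob ?pq (snd -` {y. \<not> Q y}) = 1 - measure_pmf.prob q {y. Q y}"
    using measure_map_pmf[of snd ?pq "{y. \<not> Q y}"] measure_pmf.prob_neg[of q Q]
    by (simp add: map_snd_pair_pmf)
  ultimately show ?thesis using P Q by linarith
qed

lemma deg_le_card: "finite F \<Longrightarrow> deg F v \<le> card F"
  unfolding deg_def by (rule card_mono) auto

lemma finite_degrees: "finite F \<Longrightarrow> finite ({deg F v | v. v \<in> \<Union>F} \<union> {0})"
  by (rule finite_subset[of _ "{..card F}"]) (auto simp: deg_le_card)

lemma deg_le_maxdeg:
  assumes "finite F"
  shows "deg F v \<le> maxdeg F"
proof (cases "v \<in> \<Union>F")
  case True
  then show ?thesis
    unfolding maxdeg_def by (intro Max_ge finite_degrees assms) blast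
next
  case False
  then have "{e \<in> F. v \<in> e} = {}" by auto
  then have "deg F v = 0"
    unfolding deg_def by (simp only: card.empty)
  then show ?thesis by simp
qed

lemma maxdeg_attained:
  assumes "finite F"
  obtains v where "deg F v = maxdeg F"
proof -
  have "maxdeg F \<in> {deg F v | v. v \<in> \<Union>F} \<union> {0}"
    unfolding maxdeg_def by (intro Max_in finite_degrees assms) simp
  then consider v where "maxdeg F = deg F v" | "maxdeg F = 0"
    by auto
  then show thesis
    using that deg_le_maxdeg[OF assms] by (metis le_zero_eq)
qed

lemma deg_Diff:
  assumes "finite F" "F1 \<subseteq> F"
  shows "deg F v = deg F1 v + deg (F - F1) v"
proof -
  have "{e \<in> F. v \<in> e} = {e \<in> F1. v \<in> e} \<union> {e \<in> F - F1. v \<in> e}"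
    using assms(2) by auto
  then show ?thesis
    unfolding deg_def using assms by (subst card_Un_disjoint[symmetric]) (auto intro: finite_subset)
qed

lemma degree_splitting_Diff:
  "degree_splitting F F1 \<kappa> \<Longrightarrow> degree_splitting F (F - F1) \<kappa>"
  unfolding degree_splitting_def by (simp add: double_diff abs_minus_commute)

lemma degree_splitting_deg:
  assumes "finite F" "degree_splitting F F1 \<kappa>"
  shows "2 * deg F1 v \<le> deg F v + \<kappa>" "deg F v \<le> 2 * deg F1 v + \<kappa>"
proof -
  have "deg F v = deg F1 v + deg (F - F1) v"
    using assms by (intro deg_Diff) (auto simp: degree_splitting_def)
  moreover have "\<bar>int (deg F1 v) - int (deg (F - F1) v)\<bar> \<le> int \<kappa>"
    using assms(2) by (simp add: degree_splitting_def)
  ultimately show "2 * deg F1 v \<le> deg F v + \<kappa>" "deg F v \<le> 2 * deg F1 v + \<kappa>"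
    by linarith+
qed

lemma degree_splitting_maxdeg:
  assumes "finite F" "degree_splitting F F1 \<kappa>"
  shows "2 * maxdeg F1 \<le> maxdeg F + \<kappa>" "maxdeg F \<le> 2 * maxdeg F1 + \<kappa>"
proof -
  have "finite F1"
    using assms by (auto simp: degree_splitting_def intro: finite_subset)
  obtain v where "deg F1 v = maxdeg F1"
    using maxdeg_attained[OF \<open>finite F1\<close>] .
  then show "2 * maxdeg F1 \<le> maxdeg F + \<kappa>"
    using degree_splitting_deg(1)[OF assms, of v] deg_le_maxdeg[OF assms(1), of v] by linarith
  obtain w where "deg F w = maxdeg F"
    using maxdeg_attained[OF assms(1)] .
  then show "maxdeg F \<le> 2 * maxdeg F1 + \<kappa>"
    using degree_splitting_deg(2)[OF assms, of w] deg_le_maxdeg[OF \<open>finite F1\<close>, of w] by linarith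
qed

lemma proper_edge_coloring_mono:
  "proper_edge_coloring F \<phi> k \<Longrightarrow> k \<le> k' \<Longrightarrow> proper_edge_coloring F \<phi> k'"
  unfolding proper_edge_coloring_def by auto

lemma proper_edge_coloring_combine:
  assumes "proper_edge_coloring F1 \<phi>1 k1" and "proper_edge_coloring (F - F1) \<phi>2 k2"
  shows "proper_edge_coloring F (\<lambda>e. if e \<in> F1 then \<phi>1 e else k1 + \<phi>2 e) (k1 + k2)"
proof -
  let ?\<phi> = "\<lambda>e. if e \<in> F1 then \<phi>1 e else k1 + \<phi>2 e"
  have range1: "\<phi>1 e \<in> {1..k1}" if "e \<in> F1" for e
    using assms(1) that by (simp add: proper_edge_coloring_def)
  have range2: "\<phi>2 e \<in> {1..k2}" if "e \<in> F" "e \<notin> F1" for e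
    using assms(2) that by (simp add: proper_edge_coloring_def)
  have "?\<phi> e \<noteq> ?\<phi> e'" if "e \<in> F" "e' \<in> F" "e \<noteq> e'" "e \<inter> e' \<noteq> {}" for e e'
  proof (cases "e \<in> F1 \<longleftrightarrow> e' \<in> F1")
    case True
    then show ?thesis
      using assms that unfolding proper_edge_coloring_def by (cases "e \<in> F1") auto
  next
    case False
    then show ?thesis
      using range1[of e] range1[of e'] range2[of e] range2[of e'] that by (cases "e \<in> F1") auto
  qed
  moreover have "?\<phi> e \<in> {1..k1 + k2}" if "e \<in> F" for e
    using range1 range2 that by fastforce
  ultimately show ?thesis
    unfolding proper_edge_coloring_def by blast
qed

context
  fixes E :: "'a set set" and split :: "'a set set \<Rightarrow> 'a set set"
  assumes finite_E: "finite E"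
    and splitting: "\<And>F. F \<subseteq> E \<Longrightarrow> degree_splitting F (split F) 2"
begin

lemma split_subsets:
  assumes "F \<subseteq> E"
  shows "finite F" "split F \<subseteq> E" "F - split F \<subseteq> E"
  using assms splitting[OF assms] finite_subset[OF assms finite_E]
  by (auto simp: degree_splitting_def)

lemma palette_le: "F \<subseteq> E \<Longrightarrow> palette split F h + 2 \<le> maxdeg F + 3 * 2 ^ h"
proof (induction h arbitrary: F)
  case (Suc h)
  note F = split_subsets[OF Suc.prems]
  have "2 * maxdeg (split F) \<le> maxdeg F + 2" "2 * maxdeg (F - split F) \<le> maxdeg F + 2"
    using degree_splitting_maxdeg(1) F(1) splitting[OF Suc.prems]
      degree_splitting_Diff[OF splitting[OF Suc.prems]] by blast+
  then show ?case
    using Suc.IH[OF F(2)] Suc.IH[OF F(3)] by simp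
qed simp

lemma prob_proper_edge_coloring:
  fixes rand :: "'a set set \<Rightarrow> ('a set \<Rightarrow> nat) pmf" and \<tau> B :: real
  assumes det: "\<And>F. F \<subseteq> E \<Longrightarrow> proper_edge_coloring F (detalg F) (maxdeg F + 1)"
    and rand: "\<And>F. F \<subseteq> E \<Longrightarrow> 2 \<le> maxdeg F \<Longrightarrow> \<tau> \<le> real (card (\<Union>F)) \<Longrightarrow>
        1 - B \<le> measure_pmf.prob (rand F) {\<phi>. proper_edge_coloring F \<phi> (maxdeg F + 1)}"
    and "0 \<le> B"
  shows "F \<subseteq> E \<Longrightarrow> 2 ^ (h + 2) \<le> maxdeg F + 2 \<Longrightarrow>
    1 - 2 ^ h * B \<le> measure_pmf.prob (edge_coloring split rand detalg \<tau> F h)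
      {\<phi>. proper_edge_coloring F \<phi> (palette split F h)}"
proof (induction h arbitrary: F)
  case 0
  show ?case
  proof (cases "\<tau> \<le> real (card (\<Union>F))")
    case True
    then show ?thesis
      using rand[OF 0(1) _ True] 0(2) by simp
  next
    case False
    then show ?thesis
      using det[OF 0(1)] \<open>0 \<le> B\<close> by simp
  qed
next
  case (Suc h)
  note F = split_subsets[OF Suc.prems(1)]
  have "maxdeg F \<le> 2 * maxdeg (split F) + 2" "maxdeg F \<le> 2 * maxdeg (F - split F) + 2"
    using degree_splitting_maxdeg(2) F(1) splitting[OF Suc.prems(1)]
      degree_splitting_Diff[OF splitting[OF Suc.prems(1)]] by blast+
  then have "2 ^ (h + 2) \<le> maxdeg (split F) + 2" "2 ^ (h + 2) \<le> maxdeg (F - split F) + 2"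
    using Suc.prems(2) by simp_all
  note IH = Suc.IH[OF F(2) this(1)] Suc.IH[OF F(3) this(2)]
  have "1 - 2 ^ h * B - 2 ^ h * B \<le> measure_pmf.prob (edge_coloring split rand detalg \<tau> F (Suc h))
      {\<phi>. proper_edge_coloring F \<phi> (palette split F (Suc h))}"
    unfolding edge_coloring.simps
    by (rule measure_pmf_bind_union_bound[OF IH]) (simp add: proper_edge_coloring_combine)
  then show ?case by (simp add: mult_ac)
qed

end

lemma maxdeg_le_card:
  assumes "finite V" and "\<forall>e\<in>E. e \<subseteq> V \<and> card e = 2"
  shows "maxdeg E \<le> card V"
proof -
  have "finite E"
    using finite_subset[of E "Pow V"] assms by auto
  then obtain v where v: "deg E v = maxdeg E"
    by (rule maxdeg_attained)
  have "{e \<in> E. v \<in> e} \<subseteq> (\<lambda>u. {v, u}) ` V"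
  proof
    fix e assume "e \<in> {e \<in> E. v \<in> e}"
    then obtain x y where "e = {x, y}" "v \<in> e" "e \<subseteq> V"
      using assms(2) by (auto simp: card_2_iff)
    then show "e \<in> (\<lambda>u. {v, u}) ` V" by auto
  qed
  then have "maxdeg E \<le> card ((\<lambda>u. {v, u}) ` V)"
    unfolding v[symmetric] deg_def using assms(1) by (intro card_mono) auto
  also have "\<dots> \<le> card V"
    using assms(1) by (rule card_image_le)
  finally show ?thesis .
qed

lemma pow2_le_of_log_bound:
  assumes "real h \<le> log 2 (real d) - 2"
  shows "2 ^ (h + 2) \<le> d"
proof -
  have "0 < d"
  proof (rule ccontr)
    assume "\<not> 0 < d"
    \<comment> \<open>then \<open>log 2 (real d) = 0\<close>, as \<open>ln 0 = 0\<close> in Isabelle\<close>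
    with assms show False by (simp add: log_def)
  qed
  moreover have "real (h + 2) \<le> log 2 (real d)"
    using assms by simp
  ultimately have "2 powr real (h + 2) \<le> real d"
    by (subst (asm) le_log_iff) auto
  then have "real (2 ^ (h + 2)) \<le> real d"
    by (subst (asm) powr_realpow) simp_all
  then show ?thesis
    by (simp only: of_nat_le_iff)
qed

lemma inverse_power_le_inverse_powr:
  fixes x d r :: real
  assumes "0 < x" "2 \<le> d" "r * log 2 x \<le> real k"
  shows "1 / d ^ k \<le> 1 / x powr r"
proof -
  have "x powr r = (2 powr log 2 x) powr r"
    using assms(1) by simp
  also have "\<dots> = 2 powr (r * log 2 x)"
    by (simp add: powr_powr mult.commute)
  also have "\<dots> \<le> 2 powr real k"
    using assms(3) by (intro powr_mono) auto
  also have "\<dots> = 2 ^ k"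
    by (simp add: powr_realpow)
  also have "\<dots> \<le> d ^ k"
    using assms(2) by (intro power_mono) auto
  finally show ?thesis
    using assms(1) by (intro frac_le) auto
qed

theorem claim3p7:
  fixes V :: "'a set" and E :: "'a set set" and c :: real and h :: nat
    and split :: "'a set set \<Rightarrow> 'a set set"
    and rand :: "'a set set \<Rightarrow> ('a set \<Rightarrow> nat) pmf"
    and detalg :: "'a set set \<Rightarrow> ('a set \<Rightarrow> nat)"
  assumes finV: "finite V"
    and graph: "\<forall>e\<in>E. e \<subseteq> V \<and> card e = 2"
    and c_pos: "c > 0"
    and h_bound: "real h \<le> log 2 (real (maxdeg E)) - 2"
    and split_ok: "\<forall>F\<subseteq>E. degree_splitting F (split F) 2 \<and>
        card (split F) \<in> {card F div 2, (card F + 1) div 2}"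
    and det_ok: "\<forall>F\<subseteq>E. proper_edge_coloring F (detalg F) (maxdeg F + 1)"
    and rand_ok: "\<forall>F\<subseteq>E. measure_pmf.prob (rand F) {\<phi>. proper_edge_coloring F \<phi> (maxdeg F + 1)}
        \<ge> 1 - 1 / real (maxdeg F) ^ card (\<Union>F)"
  shows "measure_pmf.prob
           (edge_coloring split rand detalg ((c + 1) * log 2 (real (card V))) E h)
           {\<phi>. proper_edge_coloring E \<phi> (maxdeg E + 3 * 2 ^ h)}
         \<ge> 1 - 1 / real (card V) powr c"
proof -
  let ?n = "real (card V)"
  let ?p = "edge_coloring split rand detalg ((c + 1) * log 2 ?n) E h"
  define B where "B = 1 / ?n powr (c + 1)"
  have finite_E: "finite E"
    using finite_subset[of E "Pow V"] finV graph by auto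
  have splitting: "\<And>F. F \<subseteq> E \<Longrightarrow> degree_splitting F (split F) 2"
    using split_ok by blast
  have "2 ^ (h + 2) \<le> maxdeg E" "maxdeg E \<le> card V"
    using pow2_le_of_log_bound[OF h_bound] maxdeg_le_card[OF finV graph] .
  then have h_n: "2 ^ h \<le> ?n"
    by (simp add: power_add)
  then have n_pos: "0 < ?n"
    using zero_less_power[of "2::real" h] by linarith
  have leaf: "1 - B \<le> measure_pmf.prob (rand F) {\<phi>. proper_edge_coloring F \<phi> (maxdeg F + 1)}"
    if "F \<subseteq> E" "2 \<le> maxdeg F" "(c + 1) * log 2 ?n \<le> real (card (\<Union>F))" for F
  proof -
    have "1 / real (maxdeg F) ^ card (\<Union>F) \<le> B"
      unfolding B_def using that(2,3) by (intro inverse_power_le_inverse_powr n_pos) auto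
    moreover have "1 - 1 / real (maxdeg F) ^ card (\<Union>F)
        \<le> measure_pmf.prob (rand F) {\<phi>. proper_edge_coloring F \<phi> (maxdeg F + 1)}"
      using rand_ok that(1) by blast
    ultimately show ?thesis
      by linarith
  qed
  have "0 \<le> B"
    unfolding B_def by simp
  have "1 - 2 ^ h * B \<le> measure_pmf.prob ?p {\<phi>. proper_edge_coloring E \<phi> (palette split E h)}"
    using det_ok \<open>2 ^ (h + 2) \<le> maxdeg E\<close>
    by (intro prob_proper_edge_coloring[OF finite_E splitting _ leaf \<open>0 \<le> B\<close>]) simp_all
  also have "\<dots> \<le> measure_pmf.prob ?p {\<phi>. proper_edge_coloring E \<phi> (maxdeg E + 3 * 2 ^ h)}"
    using palette_le[OF finite_E splitting, of E h]
    by (intro measure_pmf.finite_measure_mono) (auto intro: proper_edge_coloring_mono)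
  finally have "1 - 2 ^ h * B \<le> measure_pmf.prob ?p {\<phi>. proper_edge_coloring E \<phi> (maxdeg E + 3 * 2 ^ h)}" .
  moreover have "2 ^ h * B \<le> 1 / ?n powr c"
    using mult_right_mono[OF h_n \<open>0 \<le> B\<close>] n_pos by (simp add: B_def powr_add)
  ultimately show ?thesis
    by linarith
qed

end
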